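(* Let $\theta=(\{X_s\}_{s\in S},\{\theta_s\}_{s\in S})$ and $\gamma=(\{Y_t\}_{t\in T},\{\gamma_t\}_{t\in T})$ be almost ample topological partial actions of inverse semigroups $S$ and $T$ on spaces $X$ and $Y$, and suppose the groupoids of germs $S\ltimes X$ and $T\ltimes Y$ are isomorphic as topological groupoids. Then $\theta$ and $\gamma$ are continuously orbit equivalent.
   Context: A topological partial action $\theta$ of an inverse semigroup $S$ on $X$ consists of open $X_s\subseteq X$ and homeomorphisms $\theta_s:X_{s^*}\to X_s$ with $s\mapsto\theta_s$ a partial homomorphism into the inverse semigroup of partial bijections of $X$ (i.e. $\theta_{s^*}=\theta_s^{-1}$, $\theta_s\theta_t\le\theta_{st}$, $s\le t\Rightarrow\theta_s\le\theta_t$, where $s\le t$ iff $s=ts^*s$) and $X=\bigcup_{e\in E(S)}X_e$, $E(S)$ the idempotents. A Hausdorff space is ultraparacompact if every open cover has a refinement consisting of pairwise disjoint clopen sets. $\theta$ is almost ample if $X$ is locally compact Hausdorff and every $X_s$ ($s\in S$) is ultraparacompact. Groupoid of germs $S\ltimes X$: germs $[s,x]$ of pairs $(s,x)$ with $x\in X_{s^*}$, where $(s,x)\sim(t,y)$ iff $x=y$ and some $u\le s,t$ has $x\in X_{u^*}$; source $x$, range $\theta_s(x)$, product $[s,x][t,y]=[st,y]$ when $x=\theta_t(y)$, inverse $[s^*,\theta_s(x)]$, unit space identified with $X$; topology with basis $[s,U]=\{[s,x]:x\in U\}$, $U\subseteq X_{s^*}$ open. Continuous orbit equivalence: writing $S_x=\{s:x\in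 X_{s^*}\}$ and $S*X=\{(s,x):x\in X_{s^*}\}$ (with $S,T$ discrete), there exist a homeomorphism $\varphi:X\to Y$ and continuous $a:S*X\to T$, $b:T*Y\to S$ with $a(s,x)\in T_{\varphi(x)}$, $b(t,y)\in S_{\varphi^{-1}(y)}$, $\varphi(\theta_s(x))=\gamma_{a(s,x)}(\varphi(x))$ and $\varphi^{-1}(\gamma_t(y))=\theta_{b(t,y)}(\varphi^{-1}(y))$ for all $x$, $s\in S_x$, $y$, $t\in T_y$. *)

theory Defs
  imports "HOL-Analysis.Analysis"
begin

definition inverse_semigroup :: "'s::semigroup_mult itself \<Rightarrow> bool" where
  "inverse_semigroup _ \<longleftrightarrow> (\<forall>s::'s. \<exists>!t. s * t * s = s \<and> t * s * t = t)"

definition star :: "'s::semigroup_mult \<Rightarrow> 's" where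
  "star s = (THE t. s * t * s = s \<and> t * s * t = t)"

definition isg_le :: "'s::semigroup_mult \<Rightarrow> 's \<Rightarrow> bool" where
  "isg_le s t \<longleftrightarrow> s = t * star s * s"

definition idempotents :: "'s::semigroup_mult set" where
  "idempotents = {e. e * e = e}"

text \<open>Dom s is X_s, th s is theta_s (only meaningful on Dom (star s)).\<close>
definition partial_action ::
  "'x topology \<Rightarrow> ('s::semigroup_mult \<Rightarrow> 'x set) \<Rightarrow> ('s \<Rightarrow> 'x \<Rightarrow> 'x) \<Rightarrow> bool" where
  "partial_action TX Dom th \<longleftrightarrow>
     (\<forall>s. openin TX (Dom s)) \<and>
     (\<forall>s. homeomorphic_maps (subtopology TX (Dom (star s))) (subtopology TX (Dom s))
                             (th s) (th (star s))) \<and>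
     (\<forall>s t x. x \<in> Dom (star t) \<and> th t x \<in> Dom (star s) \<longrightarrow>
              x \<in> Dom (star (s * t)) \<and> th (s * t) x = th s (th t x)) \<and>
     (\<forall>s t. isg_le s t \<longrightarrow>
              Dom (star s) \<subseteq> Dom (star t) \<and> (\<forall>x\<in>Dom (star s). th s x = th t x)) \<and>
     topspace TX = (\<Union>e\<in>idempotents. Dom e)"

definition ultraparacompact :: "'a topology \<Rightarrow> bool" where
  "ultraparacompact T \<longleftrightarrow> Hausdorff_space T \<and>
     (\<forall>\<U>. (\<forall>U\<in>\<U>. openin T U) \<and> topspace T \<subseteq> \<Union>\<U> \<longrightarrow>
        (\<exists>\<V>. (\<forall>V\<in>\<V>. openin T V \<and> closedin T V \<and> (\<exists>U\<in>\<U>. V \<subseteq> U)) \<and>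
              \<Union>\<V> = topspace T \<and> pairwise disjnt \<V>))"

definition almost_ample ::
  "'x topology \<Rightarrow> ('s::semigroup_mult \<Rightarrow> 'x set) \<Rightarrow> ('s \<Rightarrow> 'x \<Rightarrow> 'x) \<Rightarrow> bool" where
  "almost_ample TX Dom th \<longleftrightarrow> partial_action TX Dom th \<and>
     locally_compact_space TX \<and> Hausdorff_space TX \<and>
     (\<forall>s. ultraparacompact (subtopology TX (Dom s)))"

definition germ_rel :: "('s::semigroup_mult \<Rightarrow> 'x set) \<Rightarrow> 's \<times> 'x \<Rightarrow> 's \<times> 'x \<Rightarrow> bool" where
  "germ_rel Dom p q \<longleftrightarrow> snd p = snd q \<and>
     (\<exists>u. isg_le u (fst p) \<and> isg_le u (fst q) \<and> snd p \<in> Dom (star u))"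

definition germ :: "('s::semigroup_mult \<Rightarrow> 'x set) \<Rightarrow> 's \<Rightarrow> 'x \<Rightarrow> ('s \<times> 'x) set" where
  "germ Dom s x = {(t, y). y \<in> Dom (star t) \<and> germ_rel Dom (s, x) (t, y)}"

definition germ_basis :: "'x topology \<Rightarrow> ('s::semigroup_mult \<Rightarrow> 'x set) \<Rightarrow> ('s \<times> 'x) set set set" where
  "germ_basis TX Dom = {(germ Dom s) ` U | s U. openin TX U \<and> U \<subseteq> Dom (star s)}"

text \<open>Topology of the groupoid of germs; its topspace is the set of all germs.\<close>
definition germ_top :: "'x topology \<Rightarrow> ('s::semigroup_mult \<Rightarrow> 'x set) \<Rightarrow> ('s \<times> 'x) set topology" where
  "germ_top TX Dom = topology_generated_by (germ_basis TX Dom)"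

text \<open>Graph of the groupoid multiplication: g h is defined and equals k.\<close>
definition germ_prod :: "('s::semigroup_mult \<Rightarrow> 'x set) \<Rightarrow> ('s \<Rightarrow> 'x \<Rightarrow> 'x) \<Rightarrow>
    ('s \<times> 'x) set \<Rightarrow> ('s \<times> 'x) set \<Rightarrow> ('s \<times> 'x) set \<Rightarrow> bool" where
  "germ_prod Dom th g h k \<longleftrightarrow>
     (\<exists>s x t y. x \<in> Dom (star s) \<and> y \<in> Dom (star t) \<and> x = th t y \<and>
        g = germ Dom s x \<and> h = germ Dom t y \<and> k = germ Dom (s * t) y)"

definition germ_groupoids_isomorphic ::
  "'x topology \<Rightarrow> ('s::semigroup_mult \<Rightarrow> 'x set) \<Rightarrow> ('s \<Rightarrow> 'x \<Rightarrow> 'x) \<Rightarrow>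
   'y topology \<Rightarrow> ('t::semigroup_mult \<Rightarrow> 'y set) \<Rightarrow> ('t \<Rightarrow> 'y \<Rightarrow> 'y) \<Rightarrow> bool" where
  "germ_groupoids_isomorphic TX DX th TY DY ga \<longleftrightarrow>
     (\<exists>\<Phi>. homeomorphic_map (germ_top TX DX) (germ_top TY DY) \<Phi> \<and>
        (\<forall>g\<in>topspace (germ_top TX DX). \<forall>h\<in>topspace (germ_top TX DX).
         \<forall>k\<in>topspace (germ_top TX DX).
           germ_prod DX th g h k \<longleftrightarrow> germ_prod DY ga (\<Phi> g) (\<Phi> h) (\<Phi> k)))"

definition star_space :: "'x topology \<Rightarrow> ('s::semigroup_mult \<Rightarrow> 'x set) \<Rightarrow> ('s \<times> 'x) topology" where
  "star_space TX Dom = subtopology (prod_topology (discrete_topology UNIV) TX)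
                          {(s, x). x \<in> Dom (star s)}"

definition cont_orbit_equiv ::
  "'x topology \<Rightarrow> ('s::semigroup_mult \<Rightarrow> 'x set) \<Rightarrow> ('s \<Rightarrow> 'x \<Rightarrow> 'x) \<Rightarrow>
   'y topology \<Rightarrow> ('t::semigroup_mult \<Rightarrow> 'y set) \<Rightarrow> ('t \<Rightarrow> 'y \<Rightarrow> 'y) \<Rightarrow> bool" where
  "cont_orbit_equiv TX DX th TY DY ga \<longleftrightarrow>
     (\<exists>\<phi> \<psi> (a :: 's \<Rightarrow> 'x \<Rightarrow> 't) (b :: 't \<Rightarrow> 'y \<Rightarrow> 's).
        homeomorphic_maps TX TY \<phi> \<psi> \<and>
        continuous_map (star_space TX DX) (discrete_topology UNIV) (\<lambda>(s, x). a s x) \<and>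
        continuous_map (star_space TY DY) (discrete_topology UNIV) (\<lambda>(t, y). b t y) \<and>
        (\<forall>s x. x \<in> DX (star s) \<longrightarrow>
            \<phi> x \<in> DY (star (a s x)) \<and> \<phi> (th s x) = ga (a s x) (\<phi> x)) \<and>
        (\<forall>t y. y \<in> DY (star t) \<longrightarrow>
            \<psi> y \<in> DX (star (b t y)) \<and> \<psi> (ga t y) = th (b t y) (\<psi> y)))"

end

theory Submission
  imports Defs
begin

(* The unit space of S \<ltimes> X is X, realised as the germs [e,x] with e idempotent. These units
   are exactly the arrows g such that g h = k forces k = h, so a groupoid isomorphism \<Phi>
   maps units to units and induces a homeomorphism \<phi> of the unit spaces which intertwines
   sources and ranges. Hence \<Phi>[s,x] = [t, \<phi> x] for some t with \<phi> (\<theta>_s x) = \<gamma>_t (\<phi> x), and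
   for fixed s and t the set of x admitting such a representation is open. Ultraparacompactness
   of X_{s*} refines this open cover by disjoint clopen sets, and choosing t constantly on each
   of them yields a locally constant, i.e. continuous, cocycle a. The inverse isomorphism
   gives b and the inverse of \<phi>. *)

section \<open>Inverse semigroups\<close>

locale inverse_semigroup_type =
  assumes inverse_semigroup: "inverse_semigroup TYPE('s::semigroup_mult)"
begin

lemma star_unique_ex: "\<exists>!t. (s::'s) * t * s = s \<and> t * s * t = t"
  using inverse_semigroup unfolding inverse_semigroup_def by blast

lemma mult_star_mult: "(s::'s) * star s * s = s"
  and star_mult_star: "star s * s * star s = star s"
  using theI'[OF star_unique_ex[of s]] unfolding star_def by auto

lemma star_unique:
  assumes "(s::'s) * t * s = s" "t * s * t = t"
  shows "star s = t"
  unfolding star_def using star_unique_ex assms by (simp add: the1_equality)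

lemma star_star [simp]: "star (star (s::'s)) = s"
  using mult_star_mult star_mult_star by (intro star_unique) auto

lemma star_idempotent: "(e::'s) * e = e \<Longrightarrow> star e = e"
  by (intro star_unique) auto

lemma mult_star_idempotent: "(s::'s) * star s * (s * star s) = s * star s"
  and star_mult_idempotent: "star s * s * (star s * s) = star s * s"
  using mult_star_mult[of s] by (metis mult.assoc)+

lemma idempotent_mult_idempotent:
  assumes a: "(a::'s) * a = a" and b: "b * b = b"
  shows "a * b * (a * b) = a * b"
proof -
  define x where "x = star (a * b)"
  have x1: "a * b * x * (a * b) = a * b" and x2: "x * (a * b) * x = x"
    unfolding x_def using mult_star_mult star_mult_star by auto
  have "a * b * (b * x * a) * (a * b) = a * (b * b) * x * (a * a) * b"
    by (simp add: mult.assoc)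
  also have "\<dots> = a * b" using a b x1 by (simp add: mult.assoc)
  finally have 1: "a * b * (b * x * a) * (a * b) = a * b" .
  have "b * x * a * (a * b) * (b * x * a) = b * (x * (a * a) * (b * b) * x) * a"
    by (simp add: mult.assoc)
  also have "\<dots> = b * x * a" using a b x2 by (simp add: mult.assoc)
  finally have "b * x * a * (a * b) * (b * x * a) = b * x * a" .
  with 1 have "star (a * b) = b * x * a" by (rule star_unique)
  then have x_eq: "x = b * x * a" unfolding x_def .
  have "x * x = b * (x * (a * b) * x) * a" using x_eq by (metis mult.assoc)
  also have "\<dots> = x" using x2 x_eq by simp
  finally have "x * x = x" .
  moreover from this have "x = a * b"
    using star_idempotent star_star unfolding x_def by metis
  ultimately show ?thesis by simp
qed

text \<open>Both e f and f e are idempotent, and each is the inverse of the other.\<close>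
lemma idempotents_commute:
  assumes e: "(e::'s) * e = e" and f: "f * f = f"
  shows "e * f = f * e"
proof -
  have ef: "e * f * (e * f) = e * f" and fe: "f * e * (f * e) = f * e"
    using idempotent_mult_idempotent e f by auto
  have "star (e * f) = f * e"
  proof (rule star_unique)
    show "e * f * (f * e) * (e * f) = e * f" using ef e f by (metis mult.assoc)
    show "f * e * (e * f) * (f * e) = f * e" using fe e f by (metis mult.assoc)
  qed
  then show ?thesis using star_idempotent[OF ef] by simp
qed

lemma star_mult: "star ((s::'s) * t) = star t * star s"
proof (rule star_unique)
  have c: "t * star t * (star s * s) = star s * s * (t * star t)"
    by (rule idempotents_commute[OF mult_star_idempotent star_mult_idempotent])
  have "s * t * (star t * star s) * (s * t) = s * (t * star t * (star s * s)) * t"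
    by (simp add: mult.assoc)
  also have "\<dots> = (s * star s * s) * (t * star t * t)" using c by (simp add: mult.assoc)
  finally show "s * t * (star t * star s) * (s * t) = s * t" by (simp add: mult_star_mult)
  have "star t * star s * (s * t) * (star t * star s) = star t * (star s * s * (t * star t)) * star s"
    by (simp add: mult.assoc)
  also have "\<dots> = star t * (t * star t * (star s * s)) * star s" using c by simp
  also have "\<dots> = (star t * t * star t) * (star s * s * star s)" by (simp add: mult.assoc)
  finally show "star t * star s * (s * t) * (star t * star s) = star t * star s"
    by (simp add: star_mult_star)
qed

lemma isg_le_iff: "isg_le (s::'s) t \<longleftrightarrow> (\<exists>e. e * e = e \<and> s = t * e)"
proof
  assume "isg_le s t"
  then show "\<exists>e. e * e = e \<and> s = t * e"
    unfolding isg_le_def using star_mult_idempotent[of s] by (metis mult.assoc)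
next
  assume "\<exists>e. e * e = e \<and> s = t * e"
  then obtain e where e: "e * e = e" and s: "s = t * e" by blast
  have "star s = e * star t" using s star_mult[of t e] star_idempotent[OF e] by simp
  then have "star s * s = star t * t * e"
    using s idempotents_commute[OF e star_mult_idempotent[of t]] e by (metis mult.assoc)
  then have "t * star s * s = (t * star t * t) * e" by (simp add: mult.assoc)
  then show "isg_le s t" unfolding isg_le_def using s mult_star_mult by simp
qed

lemma isg_le_refl: "isg_le (s::'s) s"
  unfolding isg_le_def using mult_star_mult by simp

lemma isg_le_trans:
  assumes "isg_le (s::'s) t" "isg_le t r"
  shows "isg_le s r"
proof -
  obtain e where e: "e * e = e" "s = t * e" using assms(1) isg_le_iff by blast
  obtain f where f: "f * f = f" "t = r * f" using assms(2) isg_le_iff by blast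
  have "f * e * (f * e) = f * e" using idempotent_mult_idempotent[OF f(1) e(1)] .
  moreover have "s = r * (f * e)" using e f by (simp add: mult.assoc)
  ultimately show ?thesis using isg_le_iff by blast
qed

lemma conjugate_idempotent:
  assumes e: "(e::'s) * e = e"
  shows "star r * e * r * (star r * e * r) = star r * e * r"
    and "e * r = r * (star r * e * r)"
proof -
  have c: "e * (r * star r) = r * star r * e"
    using idempotents_commute[OF e mult_star_idempotent[of r]] by (simp add: mult.assoc)
  have "star r * e * r * (star r * e * r) = star r * (e * (r * star r)) * e * r"
    by (simp add: mult.assoc)
  also have "\<dots> = (star r * r * star r) * (e * e) * r" using c by (simp add: mult.assoc)
  finally show "star r * e * r * (star r * e * r) = star r * e * r"
    using star_mult_star e by simp
  have "r * (star r * e * r) = (e * (r * star r)) * r" using c by (simp add: mult.assoc)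
  also have "\<dots> = e * (r * star r * r)" by (simp add: mult.assoc)
  finally show "e * r = r * (star r * e * r)" using mult_star_mult by simp
qed

lemma isg_le_idempotent_left: "(e::'s) * e = e \<Longrightarrow> isg_le (e * r) r"
  using conjugate_idempotent isg_le_iff by blast

lemma isg_le_idempotent_right: "(e::'s) * e = e \<Longrightarrow> isg_le (r * e) r"
  using isg_le_iff by blast

lemma isg_le_mult_right:
  assumes "isg_le (s::'s) t"
  shows "isg_le (s * r) (t * r)"
proof -
  obtain e where e: "e * e = e" "s = t * e" using assms isg_le_iff by blast
  have "s * r = t * r * (star r * e * r)"
    using e conjugate_idempotent(2)[OF e(1), of r] by (simp add: mult.assoc)
  then show ?thesis using conjugate_idempotent(1)[OF e(1), of r] isg_le_iff by blast
qed

lemma isg_le_idempotent_imp_idempotent: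
  assumes "isg_le (u::'s) e" "e * e = e"
  shows "u * u = u"
  using assms isg_le_iff idempotent_mult_idempotent by metis

lemma isg_le_common_upper_bound:
  assumes "isg_le (u::'s) t" "isg_le v t"
  shows "u * (star v * v) = v * (star u * u)"
proof -
  have "u * (star v * v) = t * (star u * u * (star v * v))"
    using assms(1) unfolding isg_le_def by (metis mult.assoc)
  also have "\<dots> = t * (star v * v * (star u * u))"
    using idempotents_commute[OF star_mult_idempotent star_mult_idempotent] by simp
  also have "\<dots> = v * (star u * u)" using assms(2) unfolding isg_le_def by (metis mult.assoc)
  finally show ?thesis .
qed

end

section \<open>Germs of a partial action\<close>

definition germ_source :: "('s \<times> 'x) set \<Rightarrow> 'x" where
  "germ_source g = snd (SOME p. p \<in> g)"

definition germ_range :: "('s \<Rightarrow> 'x \<Rightarrow> 'x) \<Rightarrow> ('s \<times> 'x) set \<Rightarrow> 'x" where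
  "germ_range th g = (case SOME p. p \<in> g of (s, x) \<Rightarrow> th s x)"

definition unit_germ :: "('s::semigroup_mult \<Rightarrow> 'x set) \<Rightarrow> 'x \<Rightarrow> ('s \<times> 'x) set" where
  "unit_germ D x = germ D (SOME e. e * e = e \<and> x \<in> D e) x"

locale inverse_semigroup_action = inverse_semigroup_type +
  fixes TX :: "'x topology" and D :: "'s::semigroup_mult \<Rightarrow> 'x set" and th :: "'s \<Rightarrow> 'x \<Rightarrow> 'x"
  assumes partial_action: "partial_action TX D th"
begin

lemma openin_domain: "openin TX (D s)"
  using partial_action unfolding partial_action_def by blast

lemma domain_subset: "D s \<subseteq> topspace TX"
  using openin_domain openin_subset by blast

lemma act_in_domain: "x \<in> D (star s) \<Longrightarrow> th s x \<in> D s"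
  and star_act: "x \<in> D (star s) \<Longrightarrow> th (star s) (th s x) = x"
proof -
  assume x: "x \<in> D (star s)"
  have hm: "homeomorphic_maps (subtopology TX (D (star s))) (subtopology TX (D s)) (th s) (th (star s))"
    using partial_action unfolding partial_action_def by blast
  then have "th s x \<in> topspace (subtopology TX (D s))"
    using x domain_subset unfolding homeomorphic_maps_def continuous_map_def by auto
  then show "th s x \<in> D s" by simp
  show "th (star s) (th s x) = x" using hm x domain_subset unfolding homeomorphic_maps_def by auto
qed

lemma domain_mult:
  assumes "x \<in> D (star t)" "th t x \<in> D (star s)"
  shows "x \<in> D (star (s * t))" and act_mult: "th (s * t) x = th s (th t x)"
  using partial_action assms unfolding partial_action_def by blast+

lemma domain_mono:
  assumes "isg_le s t" "x \<in> D (star s)"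
  shows "x \<in> D (star t)" and act_mono: "th s x = th t x"
  using partial_action assms unfolding partial_action_def by blast+

lemma topspace_covered: "x \<in> topspace TX \<Longrightarrow> \<exists>e. e * e = e \<and> x \<in> D e"
  using partial_action unfolding partial_action_def idempotents_def by blast

lemma act_idempotent:
  assumes e: "e * e = e" and x: "x \<in> D e"
  shows "th e x = x"
proof -
  have x': "x \<in> D (star e)" using x star_idempotent[OF e] by simp
  have "th e (th e x) = th (e * e) x"
    using act_mult[OF x'] act_in_domain[OF x'] star_idempotent[OF e] by simp
  then show ?thesis using star_act[OF x'] star_idempotent[OF e] e by simp
qed

lemma domain_star_mult_self: "x \<in> D (star v) \<Longrightarrow> x \<in> D (star (star v * v))"
  and act_star_mult_self: "x \<in> D (star v) \<Longrightarrow> th (star v * v) x = x"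
  using domain_mult[of x v "star v"] act_mult[of x v "star v"] act_in_domain[of x v] star_act
  by simp_all

lemma germ_rel_refl: "germ_rel D (s, x) (s, x) \<longleftrightarrow> x \<in> D (star s)"
  unfolding germ_rel_def using isg_le_refl domain_mono by auto

lemma germ_rel_sym: "germ_rel D p q \<Longrightarrow> germ_rel D q p"
  unfolding germ_rel_def by auto

text \<open>Two witnesses below a common element meet in u (v* v), which is again a witness.\<close>
lemma germ_rel_trans:
  assumes "germ_rel D p q" "germ_rel D q r"
  shows "germ_rel D p r"
proof -
  obtain u where u: "isg_le u (fst p)" "isg_le u (fst q)" "snd p \<in> D (star u)" "snd p = snd q"
    using assms(1) unfolding germ_rel_def by blast
  obtain v where v: "isg_le v (fst q)" "isg_le v (fst r)" "snd q \<in> D (star v)" "snd q = snd r"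
    using assms(2) unfolding germ_rel_def by blast
  define w where "w = u * (star v * v)"
  have wu: "isg_le w u" unfolding w_def by (rule isg_le_idempotent_right[OF star_mult_idempotent])
  have "w = v * (star u * u)" unfolding w_def by (rule isg_le_common_upper_bound[OF u(2) v(1)])
  then have wv: "isg_le w v" by (simp add: isg_le_idempotent_right[OF star_mult_idempotent])
  have "snd p \<in> D (star w)" unfolding w_def
    using domain_mult[OF domain_star_mult_self] act_star_mult_self u(3,4) v(3) by simp
  then show ?thesis unfolding germ_rel_def
    using isg_le_trans[OF wu u(1)] isg_le_trans[OF wv v(2)] u(4) v(4) by auto
qed

lemma in_germ: "x \<in> D (star s) \<Longrightarrow> (s, x) \<in> germ D s x"
  unfolding germ_def using germ_rel_refl by auto

lemma germ_eq_iff: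
  assumes x: "x \<in> D (star s)"
  shows "germ D s x = germ D t y \<longleftrightarrow> y \<in> D (star t) \<and> germ_rel D (s, x) (t, y)"
proof
  assume "germ D s x = germ D t y"
  then have "(s, x) \<in> germ D t y" using in_germ[OF x] by simp
  then have r: "germ_rel D (s, x) (t, y)" unfolding germ_def by (simp add: germ_rel_sym)
  then have "y \<in> D (star t)" unfolding germ_rel_def using domain_mono by auto
  with r show "y \<in> D (star t) \<and> germ_rel D (s, x) (t, y)" by simp
next
  assume "y \<in> D (star t) \<and> germ_rel D (s, x) (t, y)"
  then show "germ D s x = germ D t y"
    unfolding germ_def using germ_rel_sym germ_rel_trans by blast
qed

lemma germ_isg_le:
  assumes "isg_le s t" "x \<in> D (star s)"
  shows "germ D s x = germ D t x"
proof -
  have "x \<in> D (star t)" using domain_mono assms by blast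
  then show ?thesis
    using assms germ_eq_iff unfolding germ_rel_def by (metis fst_conv isg_le_refl snd_conv)
qed

lemma germ_some:
  assumes x: "x \<in> D (star s)"
  shows "snd (SOME p. p \<in> germ D s x) = x"
    and "(case SOME p. p \<in> germ D s x of (t, y) \<Rightarrow> th t y) = th s x"
proof -
  obtain t y where p: "(SOME p. p \<in> germ D s x) = (t, y)" by fastforce
  have "(t, y) \<in> germ D s x" unfolding p[symmetric] using in_germ[OF x] by (rule someI)
  then have "y = x \<and> th t y = th s x"
    unfolding germ_def germ_rel_def using x domain_mono act_mono by (auto, metis)
  then show "snd (SOME p. p \<in> germ D s x) = x"
    and "(case SOME p. p \<in> germ D s x of (t, y) \<Rightarrow> th t y) = th s x"
    unfolding p by auto
qed

lemma germ_source_germ: "x \<in> D (star s) \<Longrightarrow> germ_source (germ D s x) = x"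
  unfolding germ_source_def using germ_some by blast

lemma germ_range_germ: "x \<in> D (star s) \<Longrightarrow> germ_range th (germ D s x) = th s x"
  unfolding germ_range_def using germ_some by blast

lemma germ_mult_idempotent_right:
  assumes x: "x \<in> D (star s)" and e: "e * e = e" "x \<in> D e"
  shows "x \<in> D (star (s * e))" "germ D (s * e) x = germ D s x"
proof -
  show xe: "x \<in> D (star (s * e))"
    using domain_mult[of x e s] star_idempotent e act_idempotent x by simp
  show "germ D (s * e) x = germ D s x"
    using germ_isg_le[OF isg_le_idempotent_right[OF e(1)] xe] .
qed

lemma germ_mult_idempotent_left:
  assumes x: "x \<in> D (star s)" and e: "e * e = e" "th s x \<in> D e"
  shows "x \<in> D (star (e * s))" "germ D (e * s) x = germ D s x"
proof -
  show xe: "x \<in> D (star (e * s))" using domain_mult[of x s e] star_idempotent e x by simp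
  show "germ D (e * s) x = germ D s x"
    using germ_isg_le[OF isg_le_idempotent_left[OF e(1)] xe] .
qed

lemma topspace_germ_top: "topspace (germ_top TX D) = {germ D s x | s x. x \<in> D (star s)}"
proof -
  have "\<Union>(germ_basis TX D) = {germ D s x | s x. x \<in> D (star s)}"
  proof
    show "\<Union>(germ_basis TX D) \<subseteq> {germ D s x | s x. x \<in> D (star s)}"
      unfolding germ_basis_def by blast
    show "{germ D s x | s x. x \<in> D (star s)} \<subseteq> \<Union>(germ_basis TX D)"
    proof
      fix g assume "g \<in> {germ D s x | s x. x \<in> D (star s)}"
      then obtain s x where "x \<in> D (star s)" "g = germ D s x" by blast
      moreover have "germ D s ` D (star s) \<in> germ_basis TX D"
        unfolding germ_basis_def using openin_domain by blast
      ultimately show "g \<in> \<Union>(germ_basis TX D)" by blast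
    qed
  qed
  then show ?thesis unfolding germ_top_def by simp
qed

lemma germ_in_topspace: "x \<in> D (star s) \<Longrightarrow> germ D s x \<in> topspace (germ_top TX D)"
  unfolding topspace_germ_top by blast

lemma germ_range_in_topspace:
  "g \<in> topspace (germ_top TX D) \<Longrightarrow> germ_range th g \<in> topspace TX"
  unfolding topspace_germ_top using germ_range_germ act_in_domain domain_subset by fastforce

lemma unit_germ_eq:
  assumes e: "e * e = e" "x \<in> D e"
  shows "unit_germ D x = germ D e x"
proof -
  define f where "f = (SOME e. e * e = e \<and> x \<in> D e)"
  have f: "f * f = f" "x \<in> D f"
    unfolding f_def using someI[of "\<lambda>e. e * e = e \<and> x \<in> D e"] e by auto
  have "germ D (e * f) x = germ D e x"
    using germ_mult_idempotent_right[of x e f] e f star_idempotent by simp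
  moreover have "germ D (f * e) x = germ D f x"
    using germ_mult_idempotent_right[of x f e] e f star_idempotent by simp
  ultimately show ?thesis
    unfolding unit_germ_def f_def[symmetric] using idempotents_commute[OF e(1) f(1)] by simp
qed

lemma unit_germ_in_topspace: "x \<in> topspace TX \<Longrightarrow> unit_germ D x \<in> topspace (germ_top TX D)"
  and germ_source_unit_germ: "x \<in> topspace TX \<Longrightarrow> germ_source (unit_germ D x) = x"
  and germ_range_unit_germ: "x \<in> topspace TX \<Longrightarrow> germ_range th (unit_germ D x) = x"
proof -
  assume "x \<in> topspace TX"
  then obtain e where e: "e * e = e" "x \<in> D e" using topspace_covered by blast
  then have x: "x \<in> D (star e)" using star_idempotent by simp
  show "unit_germ D x \<in> topspace (germ_top TX D)"
    unfolding unit_germ_eq[OF e] using germ_in_topspace[OF x] .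
  show "germ_source (unit_germ D x) = x" unfolding unit_germ_eq[OF e] using germ_source_germ[OF x] .
  show "germ_range th (unit_germ D x) = x"
    unfolding unit_germ_eq[OF e] using germ_range_germ[OF x] act_idempotent[OF e] by simp
qed

lemma germ_prod_source_eq_range:
  assumes "germ_prod D th g h k"
  shows "germ_source g = germ_range th h"
  using assms domain_mult act_mult unfolding germ_prod_def
  by (auto simp: germ_source_germ germ_range_germ)

lemma germ_prod_unit_right:
  assumes g: "g \<in> topspace (germ_top TX D)"
  shows "germ_prod D th g (unit_germ D (germ_source g)) g"
proof -
  obtain s x where A: "x \<in> D (star s)" "g = germ D s x" using g unfolding topspace_germ_top by blast
  obtain e where e: "e * e = e" "x \<in> D e" using topspace_covered A domain_subset by blast
  have "unit_germ D (germ_source g) = germ D e x" using A germ_source_germ unit_germ_eq[OF e] by simp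
  moreover have "g = germ D (s * e) x" using germ_mult_idempotent_right[OF A(1) e] A by simp
  ultimately show ?thesis unfolding germ_prod_def
    by (intro exI[of _ s] exI[of _ x] exI[of _ e]) (simp add: A e star_idempotent act_idempotent)
qed

lemma germ_prod_unit_left:
  assumes g: "g \<in> topspace (germ_top TX D)"
  shows "germ_prod D th (unit_germ D (germ_range th g)) g g"
proof -
  obtain s x where A: "x \<in> D (star s)" "g = germ D s x" using g unfolding topspace_germ_top by blast
  obtain e where e: "e * e = e" "th s x \<in> D e"
    using topspace_covered act_in_domain[OF A(1)] domain_subset by blast
  have "unit_germ D (germ_range th g) = germ D e (th s x)" using A germ_range_germ unit_germ_eq[OF e] by simp
  moreover have "g = germ D (e * s) x" using germ_mult_idempotent_left[OF A(1) e] A by simp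
  ultimately show ?thesis unfolding germ_prod_def
    by (intro exI[of _ e] exI[of _ "th s x"] exI[of _ s] exI[of _ x]) (simp add: A e star_idempotent)
qed

definition identity_arrow :: "('s \<times> 'x) set \<Rightarrow> bool" where
  "identity_arrow g \<longleftrightarrow> g \<in> topspace (germ_top TX D) \<and>
     (\<forall>h\<in>topspace (germ_top TX D). \<forall>k\<in>topspace (germ_top TX D). germ_prod D th g h k \<longrightarrow> k = h)"

text \<open>If [s,x] = [e,x] with e idempotent, a common lower bound u is idempotent, and then
  [s t, y] = [u t, y] = [t, y].\<close>
lemma identity_arrow_unit_germ:
  assumes z: "z \<in> topspace TX"
  shows "identity_arrow (unit_germ D z)"
proof -
  obtain e where e: "e * e = e" "z \<in> D e" using topspace_covered[OF z] by blast
  have "k = h" if P: "germ_prod D th (germ D e z) h k" for h k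
  proof -
    obtain s x t y where A: "x \<in> D (star s)" "y \<in> D (star t)" "x = th t y"
      "germ D e z = germ D s x" "h = germ D t y" "k = germ D (s * t) y"
      using P unfolding germ_prod_def by metis
    then have "germ_rel D (s, x) (e, z)" using germ_eq_iff[OF A(1)] by metis
    then obtain u where u: "isg_le u s" "isg_le u e" "x \<in> D (star u)" "x = z"
      unfolding germ_rel_def prod.sel by blast
    have uu: "u * u = u" by (rule isg_le_idempotent_imp_idempotent[OF u(2) e(1)])
    have yu: "y \<in> D (star (u * t))" using domain_mult[of y t u] A u by simp
    have "germ D (u * t) y = germ D (s * t) y"
      using germ_isg_le[OF isg_le_mult_right[OF u(1)] yu] .
    moreover have "germ D (u * t) y = germ D t y"
      using germ_mult_idempotent_left[OF A(2) uu] A u star_idempotent[OF uu] by simp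
    ultimately show "k = h" using A by simp
  qed
  then show ?thesis
    unfolding identity_arrow_def unit_germ_eq[OF e] using unit_germ_in_topspace[OF z] unit_germ_eq[OF e]
    by simp
qed

lemma identity_arrow_iff: "identity_arrow g \<longleftrightarrow> (\<exists>x\<in>topspace TX. g = unit_germ D x)"
proof
  assume U: "identity_arrow g"
  then have g: "g \<in> topspace (germ_top TX D)" unfolding identity_arrow_def by blast
  then obtain s x where "x \<in> D (star s)" "g = germ D s x" unfolding topspace_germ_top by blast
  then have x: "germ_source g \<in> topspace TX" using germ_source_germ domain_subset by auto
  have "g = unit_germ D (germ_source g)"
    using U germ_prod_unit_right[OF g] unit_germ_in_topspace[OF x] g unfolding identity_arrow_def by blast
  with x show "\<exists>x\<in>topspace TX. g = unit_germ D x" by blast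
qed (use identity_arrow_unit_germ in blast)

lemma openin_germ_preimage_basic:
  assumes U: "openin TX U" "U \<subseteq> D (star r)"
  shows "openin TX {x \<in> D (star s). germ D s x \<in> germ D r ` U}"
proof (subst openin_subopen, intro ballI)
  fix x assume "x \<in> {x \<in> D (star s). germ D s x \<in> germ D r ` U}"
  then obtain u where x: "x \<in> D (star s)" "u \<in> U" "germ D s x = germ D r u" by blast
  then have "germ_rel D (s, x) (r, u)" using germ_eq_iff[OF x(1)] by blast
  then obtain w where w: "isg_le w s" "isg_le w r" "x \<in> D (star w)" "u = x"
    unfolding germ_rel_def prod.sel by blast
  have "D (star w) \<inter> U \<subseteq> {x \<in> D (star s). germ D s x \<in> germ D r ` U}"
  proof
    fix x' assume x': "x' \<in> D (star w) \<inter> U"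
    then have "germ D s x' = germ D r x'" using germ_isg_le[OF w(1)] germ_isg_le[OF w(2)] by simp
    with x' show "x' \<in> {x \<in> D (star s). germ D s x \<in> germ D r ` U}" using domain_mono w(1) by auto
  qed
  moreover have "openin TX (D (star w) \<inter> U)" using openin_domain U(1) by (rule openin_Int)
  ultimately show "\<exists>T. openin TX T \<and> x \<in> T \<and> T \<subseteq> {x \<in> D (star s). germ D s x \<in> germ D r ` U}"
    using w x by blast
qed

lemma openin_germ_preimage:
  assumes "openin (germ_top TX D) Q"
  shows "openin TX {x \<in> D (star s). germ D s x \<in> Q}"
proof -
  have "generate_topology_on (germ_basis TX D) Q"
    using assms unfolding germ_top_def by (rule openin_topology_generated_by)
  then show ?thesis
  proof induct
    case Empty
    then show ?case by simp
  next
    case (Int a b)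
    have "{x \<in> D (star s). germ D s x \<in> a \<inter> b} =
          {x \<in> D (star s). germ D s x \<in> a} \<inter> {x \<in> D (star s). germ D s x \<in> b}" by blast
    then show ?case using openin_Int[OF Int(2) Int(4)] by simp
  next
    case (UN K)
    have "{x \<in> D (star s). germ D s x \<in> \<Union>K} = (\<Union>k\<in>K. {x \<in> D (star s). germ D s x \<in> k})" by blast
    then show ?case using UN.hyps by (auto intro: openin_Union)
  next
    case (Basis B)
    then obtain r U where "B = germ D r ` U" "openin TX U" "U \<subseteq> D (star r)"
      unfolding germ_basis_def by blast
    then show ?case using openin_germ_preimage_basic by simp
  qed
qed

lemma openin_germ_top_basic: "openin TX U \<Longrightarrow> openin (germ_top TX D) (germ D s ` (U \<inter> D (star s)))"
  unfolding germ_top_def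
  by (rule topology_generated_by_Basis) (unfold germ_basis_def, use openin_domain in blast)

lemma continuous_map_unit_germ: "continuous_map TX (germ_top TX D) (unit_germ D)"
  unfolding continuous_map_def
proof (intro conjI allI impI)
  show "unit_germ D \<in> topspace TX \<rightarrow> topspace (germ_top TX D)" using unit_germ_in_topspace by blast
  fix Q assume Q: "openin (germ_top TX D) Q"
  have "{x \<in> topspace TX. unit_germ D x \<in> Q} =
        (\<Union>e\<in>idempotents. {x \<in> D (star e). germ D e x \<in> Q})"
  proof (intro equalityI subsetI)
    fix x assume x: "x \<in> {x \<in> topspace TX. unit_germ D x \<in> Q}"
    then obtain e where e: "e * e = e" "x \<in> D e" using topspace_covered by blast
    then show "x \<in> (\<Union>e\<in>idempotents. {x \<in> D (star e). germ D e x \<in> Q})"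
      using x unit_germ_eq[OF e] star_idempotent[OF e(1)] unfolding idempotents_def by auto
  next
    fix x assume "x \<in> (\<Union>e\<in>idempotents. {x \<in> D (star e). germ D e x \<in> Q})"
    then obtain e where e: "e * e = e" "x \<in> D e" "germ D e x \<in> Q"
      unfolding idempotents_def using star_idempotent by auto
    then show "x \<in> {x \<in> topspace TX. unit_germ D x \<in> Q}"
      using unit_germ_eq[OF e(1,2)] domain_subset by auto
  qed
  then show "openin TX {x \<in> topspace TX. unit_germ D x \<in> Q}"
    using openin_germ_preimage[OF Q] by auto
qed

lemma continuous_map_germ_source: "continuous_map (germ_top TX D) TX germ_source"
  unfolding continuous_map_def
proof (intro conjI allI impI)
  show "germ_source \<in> topspace (germ_top TX D) \<rightarrow> topspace TX"
    unfolding topspace_germ_top using germ_source_germ domain_subset by fastforce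
  fix V assume V: "openin TX V"
  have "{g \<in> topspace (germ_top TX D). germ_source g \<in> V} = (\<Union>s. germ D s ` (V \<inter> D (star s)))"
    unfolding topspace_germ_top using germ_source_germ by fastforce
  then show "openin (germ_top TX D) {g \<in> topspace (germ_top TX D). germ_source g \<in> V}"
    using openin_germ_top_basic[OF V] by auto
qed

lemma continuous_map_star_space_discrete:
  assumes "\<And>s t. openin TX {x \<in> D (star s). f s x = t}"
  shows "continuous_map (star_space TX D) (discrete_topology UNIV) (\<lambda>(s, x). f s x)"
  unfolding continuous_map_def
proof (intro conjI allI impI)
  show "(\<lambda>(s, x). f s x) \<in> topspace (star_space TX D) \<rightarrow> topspace (discrete_topology UNIV)"
    by simp
  fix U
  have "openin TX {x \<in> D (star s). f s x \<in> U}" for s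
  proof -
    have "{x \<in> D (star s). f s x \<in> U} = (\<Union>t\<in>U. {x \<in> D (star s). f s x = t})"
      by blast
    then show ?thesis using assms by auto
  qed
  then have "openin (prod_topology (discrete_topology UNIV) TX) (\<Union>s. {s} \<times> {x \<in> D (star s). f s x \<in> U})"
    using assms by (intro openin_Union) (auto simp: openin_prod_Times_iff)
  moreover have "topspace (star_space TX D) = {(s, x). x \<in> D (star s)}"
    unfolding star_space_def using domain_subset by auto
  then have "{p \<in> topspace (star_space TX D). (case p of (s, x) \<Rightarrow> f s x) \<in> U}
      = (\<Union>s. {s} \<times> {x \<in> D (star s). f s x \<in> U}) \<inter> {(s, x). x \<in> D (star s)}"
    by auto
  ultimately show "openin (star_space TX D) {p \<in> topspace (star_space TX D). (case p of (s, x) \<Rightarrow> f s x) \<in> U}"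
    unfolding star_space_def by (simp only: openin_subtopology_Int)
qed

end

section \<open>Locally constant selections on ultraparacompact spaces\<close>

lemma ultraparacompact_locally_constant_selection:
  assumes "ultraparacompact T" and W: "\<And>i. openin T (W i)" and cover: "topspace T \<subseteq> (\<Union>i. W i)"
  obtains f where "\<And>x. x \<in> topspace T \<Longrightarrow> x \<in> W (f x)"
    and "\<And>i. openin T {x \<in> topspace T. f x = i}"
proof -
  obtain \<V> where V: "\<And>V. V \<in> \<V> \<Longrightarrow> openin T V" "\<And>V. V \<in> \<V> \<Longrightarrow> \<exists>i. V \<subseteq> W i"
    and partition: "\<Union>\<V> = topspace T" "pairwise disjnt \<V>"
  proof -
    have "\<forall>\<U>. (\<forall>U\<in>\<U>. openin T U) \<and> topspace T \<subseteq> \<Union>\<U> \<longrightarrow>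
          (\<exists>\<V>. (\<forall>V\<in>\<V>. openin T V \<and> closedin T V \<and> (\<exists>U\<in>\<U>. V \<subseteq> U)) \<and>
                \<Union>\<V> = topspace T \<and> pairwise disjnt \<V>)"
      using assms(1) unfolding ultraparacompact_def by (rule conjunct2)
    moreover have "(\<forall>U\<in>range W. openin T U) \<and> topspace T \<subseteq> \<Union>(range W)"
      using W cover by (intro conjI) auto
    ultimately obtain \<V> where "\<forall>V\<in>\<V>. openin T V \<and> closedin T V \<and> (\<exists>U\<in>range W. V \<subseteq> U)"
      "\<Union>\<V> = topspace T" "pairwise disjnt \<V>"
      by iprover
    then show thesis using that by (metis rangeE)
  qed
  have covered: "x \<in> topspace T \<longleftrightarrow> (\<exists>V\<in>\<V>. x \<in> V)" for x
    unfolding partition(1)[symmetric] by blast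
  define index where "index V = (SOME i. V \<subseteq> W i)" for V
  define piece where "piece x = (SOME V. V \<in> \<V> \<and> x \<in> V)" for x
  have index: "V \<subseteq> W (index V)" if "V \<in> \<V>" for V
    unfolding index_def using V(2)[OF that] by (rule someI_ex)
  have piece: "piece x \<in> \<V> \<and> x \<in> piece x" if "x \<in> topspace T" for x
  proof -
    have "\<exists>V. V \<in> \<V> \<and> x \<in> V" using that covered[of x] by blast
    then show ?thesis unfolding piece_def by (rule someI_ex)
  qed
  have piece_eq: "piece x = V" if "V \<in> \<V>" "x \<in> V" for x V
  proof -
    have "piece x \<in> \<V> \<and> x \<in> piece x" using piece that covered[of x] by blast
    then show ?thesis using that partition(2) unfolding pairwise_def disjnt_def by blast
  qed
  show thesis
  proof
    show "x \<in> W (index (piece x))" if "x \<in> topspace T" for x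
      using piece[OF that] index by blast
    have "{x \<in> topspace T. index (piece x) = i} = \<Union>{V \<in> \<V>. index V = i}" for i
    proof (intro equalityI subsetI)
      fix x assume "x \<in> {x \<in> topspace T. index (piece x) = i}"
      then show "x \<in> \<Union>{V \<in> \<V>. index V = i}" using piece by blast
    next
      fix x assume "x \<in> \<Union>{V \<in> \<V>. index V = i}"
      then obtain V where "V \<in> \<V>" "index V = i" "x \<in> V" by blast
      then show "x \<in> {x \<in> topspace T. index (piece x) = i}" using piece_eq covered[of x] by auto
    qed
    then show "openin T {x \<in> topspace T. index (piece x) = i}" for i
      using V(1) by auto
  qed
qed

section \<open>Isomorphisms of groupoids of germs\<close>

definition unit_map ::
  "('s::semigroup_mult \<Rightarrow> 'x set) \<Rightarrow> (('s \<times> 'x) set \<Rightarrow> ('t \<times> 'y) set) \<Rightarrow> 'x \<Rightarrow> 'y" where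
  "unit_map DX Phi x = germ_source (Phi (unit_germ DX x))"

locale germ_groupoid_iso = X: inverse_semigroup_action TX DX th + Y: inverse_semigroup_action TY DY ga
  for TX :: "'x topology" and DX :: "'s::semigroup_mult \<Rightarrow> 'x set" and th
  and TY :: "'y topology" and DY :: "'t::semigroup_mult \<Rightarrow> 'y set" and ga +
  fixes Phi :: "('s \<times> 'x) set \<Rightarrow> ('t \<times> 'y) set"
  assumes homeomorphic: "homeomorphic_map (germ_top TX DX) (germ_top TY DY) Phi"
    and germ_prod_iff: "\<And>g h k. \<lbrakk>g \<in> topspace (germ_top TX DX); h \<in> topspace (germ_top TX DX);
      k \<in> topspace (germ_top TX DX)\<rbrakk> \<Longrightarrow>
      germ_prod DX th g h k \<longleftrightarrow> germ_prod DY ga (Phi g) (Phi h) (Phi k)"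
begin

lemma image_Phi: "Phi ` topspace (germ_top TX DX) = topspace (germ_top TY DY)"
  using homeomorphic_imp_surjective_map[OF homeomorphic] .

lemma inj_on_Phi: "inj_on Phi (topspace (germ_top TX DX))"
  using homeomorphic_imp_injective_map[OF homeomorphic] .

lemma identity_arrow_Phi_iff:
  assumes g: "g \<in> topspace (germ_top TX DX)"
  shows "Y.identity_arrow (Phi g) \<longleftrightarrow> X.identity_arrow g"
proof
  assume U: "Y.identity_arrow (Phi g)"
  have "k = h" if "h \<in> topspace (germ_top TX DX)" "k \<in> topspace (germ_top TX DX)"
    and "germ_prod DX th g h k" for h k
  proof -
    have "Phi k = Phi h"
      using U that germ_prod_iff[OF g] image_Phi unfolding Y.identity_arrow_def by blast
    then show ?thesis using inj_on_Phi that unfolding inj_on_def by blast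
  qed
  then show "X.identity_arrow g" unfolding X.identity_arrow_def using g by blast
next
  assume U: "X.identity_arrow g"
  have "k' = h'" if "h' \<in> topspace (germ_top TY DY)" "k' \<in> topspace (germ_top TY DY)"
    and P: "germ_prod DY ga (Phi g) h' k'" for h' k'
  proof -
    have "h' \<in> Phi ` topspace (germ_top TX DX)" "k' \<in> Phi ` topspace (germ_top TX DX)"
      using that(1,2) image_Phi by simp_all
    then obtain h k where "h \<in> topspace (germ_top TX DX)" "k \<in> topspace (germ_top TX DX)"
      "h' = Phi h" "k' = Phi k"
      by blast
    then show ?thesis using U P germ_prod_iff[OF g] unfolding X.identity_arrow_def by blast
  qed
  then show "Y.identity_arrow (Phi g)" unfolding Y.identity_arrow_def using g image_Phi by blast
qed

lemma Phi_unit_germ: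
  assumes x: "x \<in> topspace TX"
  shows "Phi (unit_germ DX x) = unit_germ DY (unit_map DX Phi x)"
    and unit_map_in_topspace: "unit_map DX Phi x \<in> topspace TY"
proof -
  have "Y.identity_arrow (Phi (unit_germ DX x))"
    using identity_arrow_Phi_iff X.unit_germ_in_topspace X.identity_arrow_unit_germ x by blast
  then obtain y where y: "y \<in> topspace TY" "Phi (unit_germ DX x) = unit_germ DY y"
    using Y.identity_arrow_iff by blast
  then have "unit_map DX Phi x = y" unfolding unit_map_def using Y.germ_source_unit_germ by simp
  with y show "Phi (unit_germ DX x) = unit_germ DY (unit_map DX Phi x)"
    and "unit_map DX Phi x \<in> topspace TY" by auto
qed

lemma germ_source_Phi:
  assumes g: "g \<in> topspace (germ_top TX DX)"
  shows "germ_source (Phi g) = unit_map DX Phi (germ_source g)"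
proof -
  have x: "germ_source g \<in> topspace TX"
    using continuous_map_image_subset_topspace[OF X.continuous_map_germ_source] g by blast
  have "germ_prod DY ga (Phi g) (Phi (unit_germ DX (germ_source g))) (Phi g)"
    using germ_prod_iff g X.germ_prod_unit_right[OF g] X.unit_germ_in_topspace[OF x] by blast
  then have "germ_source (Phi g) = germ_range ga (Phi (unit_germ DX (germ_source g)))"
    by (rule Y.germ_prod_source_eq_range)
  also have "\<dots> = unit_map DX Phi (germ_source g)"
    using Phi_unit_germ[OF x] Y.germ_range_unit_germ unit_map_in_topspace[OF x] by simp
  finally show ?thesis .
qed

lemma germ_range_Phi:
  assumes g: "g \<in> topspace (germ_top TX DX)"
  shows "germ_range ga (Phi g) = unit_map DX Phi (germ_range th g)"
proof -
  have z: "germ_range th g \<in> topspace TX" using X.germ_range_in_topspace[OF g] .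
  have "germ_prod DY ga (Phi (unit_germ DX (germ_range th g))) (Phi g) (Phi g)"
    using germ_prod_iff g X.germ_prod_unit_left[OF g] X.unit_germ_in_topspace[OF z] by blast
  then have "germ_source (Phi (unit_germ DX (germ_range th g))) = germ_range ga (Phi g)"
    by (rule Y.germ_prod_source_eq_range)
  then show ?thesis
    using Phi_unit_germ[OF z] Y.germ_source_unit_germ unit_map_in_topspace[OF z] by simp
qed

lemma continuous_map_unit_map: "continuous_map TX TY (unit_map DX Phi)"
proof -
  have "continuous_map TX TY (germ_source \<circ> Phi \<circ> unit_germ DX)"
    using X.continuous_map_unit_germ homeomorphic_imp_continuous_map[OF homeomorphic]
      Y.continuous_map_germ_source
    by (intro continuous_map_compose)
  then show ?thesis unfolding unit_map_def comp_def .
qed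

lemma inverse_iso:
  assumes "homeomorphic_maps (germ_top TX DX) (germ_top TY DY) Phi Psi"
  shows "germ_groupoid_iso TY DY ga TX DX th Psi"
proof unfold_locales
  show "homeomorphic_map (germ_top TY DY) (germ_top TX DX) Psi"
    using assms homeomorphic_maps_map by blast
  have Psi: "Psi h \<in> topspace (germ_top TX DX)" "Phi (Psi h) = h"
    if "h \<in> topspace (germ_top TY DY)" for h
    using assms that unfolding homeomorphic_maps_def continuous_map_def by blast+
  fix g h k
  assume "g \<in> topspace (germ_top TY DY)" "h \<in> topspace (germ_top TY DY)" "k \<in> topspace (germ_top TY DY)"
  then show "germ_prod DY ga g h k \<longleftrightarrow> germ_prod DX th (Psi g) (Psi h) (Psi k)"
    using germ_prod_iff[OF Psi(1) Psi(1) Psi(1)] Psi(2) by metis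
qed

lemma homeomorphic_maps_unit_map:
  assumes Psi: "homeomorphic_maps (germ_top TX DX) (germ_top TY DY) Phi Psi"
  shows "homeomorphic_maps TX TY (unit_map DX Phi) (unit_map DY Psi)"
proof -
  interpret inv: germ_groupoid_iso TY DY ga TX DX th Psi using inverse_iso[OF Psi] .
  have PsiPhi: "Psi (Phi g) = g" if "g \<in> topspace (germ_top TX DX)" for g
    using Psi that unfolding homeomorphic_maps_def by blast
  have PhiPsi: "Phi (Psi h) = h" if "h \<in> topspace (germ_top TY DY)" for h
    using Psi that unfolding homeomorphic_maps_def by blast
  show ?thesis
    unfolding homeomorphic_maps_def
  proof (intro conjI ballI continuous_map_unit_map inv.continuous_map_unit_map)
    fix x assume x: "x \<in> topspace TX"
    then have "Psi (unit_germ DY (unit_map DX Phi x)) = unit_germ DX x"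
      using Phi_unit_germ(1)[OF x] PsiPhi X.unit_germ_in_topspace by metis
    then show "unit_map DY Psi (unit_map DX Phi x) = x"
      unfolding unit_map_def[of DY] using X.germ_source_unit_germ[OF x] by simp
  next
    fix y assume y: "y \<in> topspace TY"
    then have "Phi (unit_germ DX (unit_map DY Psi y)) = unit_germ DY y"
      using inv.Phi_unit_germ(1)[OF y] PhiPsi Y.unit_germ_in_topspace by metis
    then show "unit_map DX Phi (unit_map DY Psi y) = y"
      unfolding unit_map_def[of DX] using Y.germ_source_unit_germ[OF y] by simp
  qed
qed

definition representable :: "'s \<Rightarrow> 't \<Rightarrow> 'x set" where
  "representable s t = {x \<in> DX (star s). Phi (germ DX s x) \<in> germ DY t ` DY (star t)}"

lemma openin_representable: "openin TX (representable s t)"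
proof -
  have "openin (germ_top TY DY) (germ DY t ` DY (star t))"
    using Y.openin_germ_top_basic[of "topspace TY"] Y.domain_subset by (simp add: Int_absorb1)
  then have "openin (germ_top TX DX) {g \<in> topspace (germ_top TX DX). Phi g \<in> germ DY t ` DY (star t)}"
    using homeomorphic_imp_continuous_map[OF homeomorphic] unfolding continuous_map_def by blast
  from X.openin_germ_preimage[OF this, of s] show ?thesis
    unfolding representable_def using X.germ_in_topspace by (simp cong: conj_cong)
qed

lemma representable_cover:
  assumes x: "x \<in> DX (star s)"
  shows "\<exists>t. x \<in> representable s t"
proof -
  have "Phi (germ DX s x) \<in> topspace (germ_top TY DY)"
    using X.germ_in_topspace[OF x] image_Phi by blast
  then obtain t y where "y \<in> DY (star t)" "Phi (germ DX s x) = germ DY t y"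
    unfolding Y.topspace_germ_top by blast
  then show ?thesis unfolding representable_def using x by blast
qed

lemma representable_act:
  assumes "x \<in> representable s t"
  shows "unit_map DX Phi x \<in> DY (star t)" "unit_map DX Phi (th s x) = ga t (unit_map DX Phi x)"
proof -
  obtain y where A: "x \<in> DX (star s)" "y \<in> DY (star t)" "Phi (germ DX s x) = germ DY t y"
    using assms unfolding representable_def by blast
  have g: "germ DX s x \<in> topspace (germ_top TX DX)" using X.germ_in_topspace[OF A(1)] .
  have "y = unit_map DX Phi x"
    using germ_source_Phi[OF g] A X.germ_source_germ Y.germ_source_germ by simp
  moreover have "ga t y = unit_map DX Phi (th s x)"
    using germ_range_Phi[OF g] A X.germ_range_germ Y.germ_range_germ by simp
  ultimately show "unit_map DX Phi x \<in> DY (star t)" "unit_map DX Phi (th s x) = ga t (unit_map DX Phi x)"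
    using A by auto
qed

lemma cocycle_exists:
  assumes "\<And>s. ultraparacompact (subtopology TX (DX s))"
  obtains a :: "'s \<Rightarrow> 'x \<Rightarrow> 't" where
    "continuous_map (star_space TX DX) (discrete_topology UNIV) (\<lambda>(s, x). a s x)"
    "\<And>s x. x \<in> DX (star s) \<Longrightarrow>
       unit_map DX Phi x \<in> DY (star (a s x)) \<and> unit_map DX Phi (th s x) = ga (a s x) (unit_map DX Phi x)"
proof -
  have "\<exists>f. (\<forall>x\<in>DX (star s). x \<in> representable s (f x)) \<and>
            (\<forall>t. openin TX {x \<in> DX (star s). f x = t})" for s
  proof -
    let ?T = "subtopology TX (DX (star s))"
    have ts: "topspace ?T = DX (star s)" using X.domain_subset by auto
    have "openin ?T (representable s t)" for t
      using openin_representable by (rule subset_openin_subtopology) (auto simp: representable_def)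
    moreover have "topspace ?T \<subseteq> (\<Union>t. representable s t)"
      using representable_cover ts by blast
    ultimately obtain f where f: "\<And>x. x \<in> topspace ?T \<Longrightarrow> x \<in> representable s (f x)"
      "\<And>t. openin ?T {x \<in> topspace ?T. f x = t}"
      using ultraparacompact_locally_constant_selection[OF assms] by blast
    then show ?thesis
      using openin_trans_full[OF _ X.openin_domain] unfolding ts by metis
  qed
  then obtain a where a: "\<And>s x. x \<in> DX (star s) \<Longrightarrow> x \<in> representable s (a s x)"
    "\<And>s t. openin TX {x \<in> DX (star s). a s x = t}"
    by metis
  show thesis
    using that X.continuous_map_star_space_discrete[OF a(2)] representable_act a(1) by blast
qed

end

theorem theorem8p9:
  fixes TX :: "'x topology" and DX :: "'s::semigroup_mult \<Rightarrow> 'x set" and th :: "'s \<Rightarrow> 'x \<Rightarrow> 'x"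
    and TY :: "'y topology" and DY :: "'t::semigroup_mult \<Rightarrow> 'y set" and ga :: "'t \<Rightarrow> 'y \<Rightarrow> 'y"
  assumes "inverse_semigroup TYPE('s)" and "inverse_semigroup TYPE('t)"
    and "almost_ample TX DX th" and "almost_ample TY DY ga"
    and "germ_groupoids_isomorphic TX DX th TY DY ga"
  shows "cont_orbit_equiv TX DX th TY DY ga"
proof -
  obtain Phi where Phi: "homeomorphic_map (germ_top TX DX) (germ_top TY DY) Phi"
    "\<forall>g\<in>topspace (germ_top TX DX). \<forall>h\<in>topspace (germ_top TX DX). \<forall>k\<in>topspace (germ_top TX DX).
       germ_prod DX th g h k \<longleftrightarrow> germ_prod DY ga (Phi g) (Phi h) (Phi k)"
    using assms(5) unfolding germ_groupoids_isomorphic_def by blast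
  then obtain Psi where Psi: "homeomorphic_maps (germ_top TX DX) (germ_top TY DY) Phi Psi"
    using homeomorphic_map_maps by blast
  have iso: "germ_groupoid_iso TX DX th TY DY ga Phi"
    using assms(1-4) Phi unfolding germ_groupoid_iso_def germ_groupoid_iso_axioms_def
      inverse_semigroup_action_def inverse_semigroup_action_axioms_def inverse_semigroup_type_def
      almost_ample_def by blast
  then have iso': "germ_groupoid_iso TY DY ga TX DX th Psi"
    using Psi by (rule germ_groupoid_iso.inverse_iso)
  obtain a where "continuous_map (star_space TX DX) (discrete_topology UNIV) (\<lambda>(s, x). a s x)"
    "\<And>s x. x \<in> DX (star s) \<Longrightarrow> unit_map DX Phi x \<in> DY (star (a s x)) \<and>
       unit_map DX Phi (th s x) = ga (a s x) (unit_map DX Phi x)"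
    using germ_groupoid_iso.cocycle_exists[OF iso] assms(3) unfolding almost_ample_def by blast
  moreover obtain b where "continuous_map (star_space TY DY) (discrete_topology UNIV) (\<lambda>(t, y). b t y)"
    "\<And>t y. y \<in> DY (star t) \<Longrightarrow> unit_map DY Psi y \<in> DX (star (b t y)) \<and>
       unit_map DY Psi (ga t y) = th (b t y) (unit_map DY Psi y)"
    using germ_groupoid_iso.cocycle_exists[OF iso'] assms(4) unfolding almost_ample_def by blast
  moreover have "homeomorphic_maps TX TY (unit_map DX Phi) (unit_map DY Psi)"
    using iso Psi by (rule germ_groupoid_iso.homeomorphic_maps_unit_map)
  ultimately show ?thesis unfolding cont_orbit_equiv_def by blast
qed

end
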